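(* For any integer $\delta$ and any bipartition $\lambda$, $\delta$ equals the number of vertices labelled $\times$ minus the number of vertices labelled $\bigcirc$ in the weight diagram $x_\lambda(\delta)$.
   Context: A partition is a weakly decreasing sequence $\alpha=(\alpha_1,\alpha_2,\dots)$ of nonnegative integers, almost all zero. A bipartition is a pair $\lambda=(\lambda^\bullet,\lambda^\circ)$ of partitions. Set $I_\wedge(\lambda)=\{\lambda^\bullet_i-(i-1): i\ge1\}$ and $I_\vee(\lambda,\delta)=\{i-\delta-\lambda^\circ_i: i\ge1\}$. The weight diagram $x_\lambda(\delta)$ labels each integer $j$ by: - $\bigcirc$ if $j\notin I_\wedge(\lambda)\cup I_\vee(\lambda,\delta)$; - $\wedge$ if $j\in I_\wedge(\lambda)\setminus I_\vee(\lambda,\delta)$; - $\vee$ if $j\in I_\vee(\lambda,\delta)\setminus I_\wedge(\lambda)$; - $\times$ if $j\in I_\wedge(\lambda)\cap I_\vee(\lambda,\delta)$. (Only finitely many vertices are labelled $\times$ or $\bigcirc$.) *)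

theory Defs
  imports Main
begin

text \<open>A partition is encoded as a function a :: nat => nat with a k = alpha_(k+1)
  (0-based indexing of the parts). It must be weakly decreasing and almost all zero.\<close>
definition is_partition :: "(nat \<Rightarrow> nat) \<Rightarrow> bool" where
  "is_partition a \<longleftrightarrow> (\<forall>k. a (Suc k) \<le> a k) \<and> finite {k. a k \<noteq> 0}"

definition is_bipartition :: "(nat \<Rightarrow> nat) \<times> (nat \<Rightarrow> nat) \<Rightarrow> bool" where
  "is_bipartition lam \<longleftrightarrow> is_partition (fst lam) \<and> is_partition (snd lam)"

text \<open>I_wedge(lambda) = {lambda_bullet_i - (i-1) : i >= 1}; with i = k+1.\<close>
definition I_wedge :: "(nat \<Rightarrow> nat) \<times> (nat \<Rightarrow> nat) \<Rightarrow> int set" where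
  "I_wedge lam = {int (fst lam k) - int k | k. True}"

text \<open>I_vee(lambda, delta) = {i - delta - lambda_circ_i : i >= 1}; with i = k+1.\<close>
definition I_vee :: "(nat \<Rightarrow> nat) \<times> (nat \<Rightarrow> nat) \<Rightarrow> int \<Rightarrow> int set" where
  "I_vee lam \<delta> = {int k + 1 - \<delta> - int (snd lam k) | k. True}"

datatype label = Circ | Up | Down | Cross

definition weight_diagram :: "(nat \<Rightarrow> nat) \<times> (nat \<Rightarrow> nat) \<Rightarrow> int \<Rightarrow> int \<Rightarrow> label" where
  "weight_diagram lam \<delta> j =
     (if j \<in> I_wedge lam \<and> j \<in> I_vee lam \<delta> then Cross
      else if j \<in> I_wedge lam then Up
      else if j \<in> I_vee lam \<delta> then Down
      else Circ)"

end

theory Submission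
  imports Defs
begin

text \<open>Both index sets are images of strictly monotone sequences which are eventually
  unit steps: \<open>I_wedge\<close> contains every sufficiently negative integer and nothing above
  \<open>\<lambda>\<^sup>\<bullet>\<^sub>1\<close>, while \<open>I_vee\<close> contains every sufficiently large integer and nothing below
  \<open>1 - \<delta> - \<lambda>\<^sup>\<circ>\<^sub>1\<close>. Hence all crosses and circles lie in a window \<open>[-L, L]\<close>, and by
  inclusion-exclusion inside it
  #crosses - #circles = |I_wedge \<inter> [-L,L]| + |I_vee \<inter> [-L,L]| - (2L+1)
  = (L + 1) + (L + \<delta>) - (2L + 1) = \<delta>.\<close>

definition shifted_parts :: "(nat \<Rightarrow> nat) \<Rightarrow> int set" where
  "shifted_parts a = range (\<lambda>k. int (a k) - int k)"

lemma I_wedge_eq_shifted_parts: "I_wedge lam = shifted_parts (fst lam)"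
  unfolding I_wedge_def shifted_parts_def by auto

lemma I_vee_eq_reflected_shifted_parts:
  "I_vee lam \<delta> = (\<lambda>j. 1 - \<delta> - j) ` shifted_parts (snd lam)"
  unfolding I_vee_def shifted_parts_def by (auto simp: image_image algebra_simps)

lemma weight_diagram_Cross_eq:
  "{j. weight_diagram lam \<delta> j = Cross} = I_wedge lam \<inter> I_vee lam \<delta>"
  unfolding weight_diagram_def by auto

lemma weight_diagram_Circ_eq:
  "{j. weight_diagram lam \<delta> j = Circ} = - (I_wedge lam \<union> I_vee lam \<delta>)"
  unfolding weight_diagram_def by auto

lemma partition_antimono: "is_partition a \<Longrightarrow> antimono a"
  unfolding is_partition_def antimono_iff_le_Suc by blast

lemma partition_eventually_zero:
  assumes "is_partition a"
  obtains N where "\<And>k. N \<le> k \<Longrightarrow> a k = 0"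
proof -
  obtain N where "\<forall>k\<in>{k. a k \<noteq> 0}. k < N"
    using assms finite_nat_set_iff_bounded unfolding is_partition_def by blast
  then have "\<And>k. N \<le> k \<Longrightarrow> a k = 0" by (meson leD mem_Collect_eq)
  then show thesis by (rule that)
qed

lemma shifted_parts_le_first:
  assumes "antimono a" and "j \<in> shifted_parts a"
  shows "j \<le> int (a 0)"
proof -
  obtain k where "j = int (a k) - int k" using assms(2) unfolding shifted_parts_def by blast
  moreover have "a k \<le> a 0" using antimonoD[OF assms(1)] by simp
  ultimately show ?thesis by simp
qed

lemma shifted_parts_tail:
  assumes "\<And>k. N \<le> k \<Longrightarrow> a k = 0" and "j \<le> - int N"
  shows "j \<in> shifted_parts a"
proof -
  have "j = int (a (nat (- j))) - int (nat (- j))"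
    using assms by simp
  then show ?thesis unfolding shifted_parts_def by blast
qed

lemma inj_shifted_parts_enumeration:
  assumes "antimono a"
  shows "inj (\<lambda>k. int (a k) - int k)"
proof (rule linorder_injI)
  fix k k' :: nat
  assume "k < k'"
  then show "int (a k) - int k \<noteq> int (a k') - int k'"
    using antimonoD[OF assms, of k k'] by simp
qed

text \<open>Exactly the values of the indices \<open>k \<le> m\<close> lie above \<open>-m\<close>, since beyond \<open>m\<close> the
  sequence steps down by one from \<open>-m - 1\<close>.\<close>
lemma card_shifted_parts_Icc:
  fixes a :: "nat \<Rightarrow> nat" and m n :: int
  assumes mono: "antimono a" and zero: "\<And>k. m < int k \<Longrightarrow> a k = 0"
    and top: "int (a 0) \<le> n"
  shows "card (shifted_parts a \<inter> {-m..n}) = nat (m + 1)"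
proof -
  let ?f = "\<lambda>k. int (a k) - int k"
  have "shifted_parts a \<inter> {-m..n} = ?f ` {..<nat (m + 1)}"
  proof (intro set_eqI iffI)
    fix x assume "x \<in> shifted_parts a \<inter> {-m..n}"
    then obtain k where x: "x = ?f k" "-m \<le> x" unfolding shifted_parts_def by auto
    have "int k \<le> m"
    proof (rule ccontr)
      assume "\<not> int k \<le> m"
      then show False using zero[of k] x by simp
    qed
    then show "x \<in> ?f ` {..<nat (m + 1)}" using x by auto
  next
    fix x assume "x \<in> ?f ` {..<nat (m + 1)}"
    then obtain k where "x = ?f k" "int k \<le> m" by auto
    moreover have "a k \<le> a 0" using antimonoD[OF mono] by simp
    ultimately show "x \<in> shifted_parts a \<inter> {-m..n}"
      using top unfolding shifted_parts_def by auto
  qed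
  then show ?thesis
    using card_image[OF inj_on_subset[OF inj_shifted_parts_enumeration[OF mono]]] by simp
qed

lemma card_reflection_Int_Icc:
  fixes S :: "int set"
  shows "card ((\<lambda>j. c - j) ` S \<inter> {p..q}) = card (S \<inter> {c - q..c - p})"
proof -
  have "(\<lambda>j. c - j) ` S \<inter> {p..q} = (\<lambda>j. c - j) ` (S \<inter> {c - q..c - p})"
    by force
  moreover have "inj (\<lambda>j :: int. c - j)" by (rule injI) simp
  ultimately show ?thesis by (simp add: card_image inj_on_subset)
qed

lemma card_reflected_shifted_parts_Icc:
  fixes b :: "nat \<Rightarrow> nat" and c p q :: int
  assumes "antimono b" and "\<And>k. q - c < int k \<Longrightarrow> b k = 0" and "int (b 0) \<le> c - p"
  shows "card ((\<lambda>j. c - j) ` shifted_parts b \<inter> {p..q}) = nat (q - c + 1)"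
  using card_shifted_parts_Icc[of b "q - c" "c - p"] assms
  unfolding card_reflection_Int_Icc by simp

lemma shifted_parts_Int_reflected_subset:
  assumes "antimono a" and "antimono b"
  shows "shifted_parts a \<inter> (\<lambda>j. c - j) ` shifted_parts b \<subseteq> {c - int (b 0)..int (a 0)}"
  using shifted_parts_le_first[OF assms(1)] shifted_parts_le_first[OF assms(2)] by force

lemma Compl_shifted_parts_Un_reflected_subset:
  assumes "\<And>k. N \<le> k \<Longrightarrow> a k = 0" and "\<And>k. M \<le> k \<Longrightarrow> b k = 0"
  shows "- (shifted_parts a \<union> (\<lambda>j. c - j) ` shifted_parts b) \<subseteq> {1 - int N..c + int M - 1}"
proof
  fix j assume "j \<in> - (shifted_parts a \<union> (\<lambda>j. c - j) ` shifted_parts b)"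
  then have "j \<notin> shifted_parts a" and "c - j \<notin> shifted_parts b"
    by (auto simp: image_iff)
  then have "- int N < j" and "- int M < c - j"
    using shifted_parts_tail[of N a j] shifted_parts_tail[of M b "c - j"] assms
    by (meson not_less)+
  then show "j \<in> {1 - int N..c + int M - 1}" by simp
qed

lemma card_Int_minus_card_Compl_Un:
  assumes "finite X" and "A \<inter> B \<subseteq> X" and "- (A \<union> B) \<subseteq> X"
  shows "int (card (A \<inter> B)) - int (card (- (A \<union> B)))
       = int (card (A \<inter> X)) + int (card (B \<inter> X)) - int (card X)"
proof -
  have inter: "A \<inter> B = (A \<inter> X) \<inter> (B \<inter> X)" and compl: "- (A \<union> B) = X - (A \<inter> X \<union> B \<inter> X)"
    using assms by auto
  have "card (A \<inter> X \<union> B \<inter> X) + card (A \<inter> X \<inter> (B \<inter> X)) = card (A \<inter> X) + card (B \<inter> X)"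
    using assms(1) card_Un_Int[of "A \<inter> X" "B \<inter> X"] by simp
  moreover have "card (X - (A \<inter> X \<union> B \<inter> X)) = card X - card (A \<inter> X \<union> B \<inter> X)"
    using assms(1) by (intro card_Diff_subset) auto
  moreover have "card (A \<inter> X \<union> B \<inter> X) \<le> card X"
    using assms(1) by (intro card_mono) auto
  ultimately show ?thesis unfolding inter compl by linarith
qed

theorem corollary2p2:
  fixes \<delta> :: int and lam :: "(nat \<Rightarrow> nat) \<times> (nat \<Rightarrow> nat)"
  assumes "is_bipartition lam"
  shows "\<delta> = int (card {j. weight_diagram lam \<delta> j = Cross})
             - int (card {j. weight_diagram lam \<delta> j = Circ})"
proof -
  obtain a b where lam: "lam = (a, b)" by (cases lam)
  have a: "is_partition a" and b: "is_partition b"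
    using assms unfolding is_bipartition_def lam by auto
  obtain N where N: "\<And>k. N \<le> k \<Longrightarrow> a k = 0" using partition_eventually_zero[OF a] by blast
  obtain M where M: "\<And>k. M \<le> k \<Longrightarrow> b k = 0" using partition_eventually_zero[OF b] by blast
  define L where "L = int (N + M + a 0 + b 0) + \<bar>\<delta>\<bar> + 1"
  let ?A = "shifted_parts a" and ?B = "(\<lambda>j. 1 - \<delta> - j) ` shifted_parts b"
  have "?A \<inter> ?B \<subseteq> {-L..L}"
    using shifted_parts_Int_reflected_subset[OF partition_antimono[OF a] partition_antimono[OF b]]
    by (rule order_trans) (auto simp: L_def)
  moreover have "- (?A \<union> ?B) \<subseteq> {-L..L}"
    using Compl_shifted_parts_Un_reflected_subset[OF N M] by (rule order_trans) (auto simp: L_def)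
  moreover have "card (?A \<inter> {-L..L}) = nat (L + 1)"
    using N by (intro card_shifted_parts_Icc partition_antimono[OF a]) (auto simp: L_def)
  moreover have "card (?B \<inter> {-L..L}) = nat (L + \<delta>)"
    using M by (subst card_reflected_shifted_parts_Icc) (auto simp: partition_antimono[OF b] L_def)
  ultimately have "int (card (?A \<inter> ?B)) - int (card (- (?A \<union> ?B)))
      = int (nat (L + 1)) + int (nat (L + \<delta>)) - int (nat (L - - L + 1))"
    using card_Int_minus_card_Compl_Un[of "{-L..L}" ?A ?B] by simp
  also have "\<dots> = \<delta>" unfolding L_def by (simp add: abs_if)
  finally show ?thesis
    unfolding weight_diagram_Cross_eq weight_diagram_Circ_eq I_wedge_eq_shifted_parts
      I_vee_eq_reflected_shifted_parts lam fst_conv snd_conv by linarith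
qed

end
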